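(* Let $d,N,p\in\mathbb{N}$ and let $X_1,\ldots,X_N$ be independent, uniformly distributed random points in $[0,1)^d$, with $X_j=(X_{j,1},\ldots,X_{j,d})$. For $i\in\{1,\ldots,d\}$ and $j\in\{1,\ldots,N\}$ let $X_{j,i}^{(p)}=\lfloor 2^pX_{j,i}\rfloor/2^p\in\{0,1/2^p,\ldots,(2^p-1)/2^p\}$ and $X_j^{(p)}=(X_{j,1}^{(p)},\ldots,X_{j,d}^{(p)})$. Write each $X_{j,i}^{(p)}$ in binary with $p$ digits and concatenate the corresponding $dN$ binary words (in the order $X_{1,1}^{(p)},\ldots,X_{1,d}^{(p)},X_{2,1}^{(p)},\ldots,X_{N,d}^{(p)}$) to obtain a binary word $U_m$ of length $m=pdN$. Let $\mathcal{P}=\{X_1,\ldots,X_N\}$. Then: 1. $\mathcal{P}(U_m)=\{X_1^{(p)},\ldots,X_N^{(p)}\}$; 2. $U_m$ is uniformly distributed in $\{0,1\}^m$; 3. $|D_N^{\ast}(\mathcal{P})-D_N^{\ast}(\mathcal{P}(U_m))|\le d/2^p$; 4. for every $C>0$, $$\mathbb{P}\left[D_N^{\ast}(\mathcal{P}(U_m))\ge C\sqrt{\frac{d}{N}}\right]\le\mathbb{P}\left[D_N^{\ast}(\mathcal{P})\ge C\sqrt{\frac{d}{N}}-\frac{d}{2^p}\right].$$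
   Context: For an $N$-element point set $\mathcal{Q}=\{\boldsymbol{x}_1,\ldots,\boldsymbol{x}_N\}\subset[0,1)^d$, the star-discrepancy is $D_N^{\ast}(\mathcal{Q})=\sup_{\boldsymbol{t}\in[0,1]^d}\left|\frac{\#\{k:\boldsymbol{x}_k\in[\boldsymbol{0},\boldsymbol{t})\}}{N}-\mathrm{volume}([\boldsymbol{0},\boldsymbol{t}))\right|$, where $[\boldsymbol{0},\boldsymbol{t})=[0,t_1)\times\cdots\times[0,t_d)$. Conversion of a binary word of length $m=pdN$ to a point set $\mathcal{P}(\cdot)$: split the word into $dN$ consecutive blocks of $p$ bits; a block $d_1d_2\ldots d_p$ yields the coordinate $\sum_{i=1}^p d_i2^{-i}$; consecutive groups of $d$ such coordinates form the $N$ points of $[0,1)^d$. *)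

theory Defs
  imports "HOL-Probability.Probability"
begin

text \<open>Star-discrepancy of the indexed point family x 0, ..., x (N-1) in [0,1)^d;
  a point is a function nat => real, only coordinates i < d are relevant.\<close>
definition star_disc :: "nat \<Rightarrow> nat \<Rightarrow> (nat \<Rightarrow> nat \<Rightarrow> real) \<Rightarrow> real" where
  "star_disc d N x =
     (SUP t \<in> {t :: nat \<Rightarrow> real. \<forall>i<d. 0 \<le> t i \<and> t i \<le> 1}.
        \<bar>real (card {k. k < N \<and> (\<forall>i<d. x k i < t i)}) / real N - (\<Prod>i<d. t i)\<bar>)"

text \<open>The point set P(w) of a binary word w of length p*d*N (True = digit 1):
  coordinate i of point k is built from block number k*d+i of p bits.\<close>
definition word_to_points :: "nat \<Rightarrow> nat \<Rightarrow> bool list \<Rightarrow> nat \<Rightarrow> nat \<Rightarrow> real" where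
  "word_to_points p d w k i =
     (\<Sum>l<p. (if w ! ((k * d + i) * p + l) then 1 else 0) / 2 ^ (l + 1))"

definition bin_word :: "nat \<Rightarrow> nat \<Rightarrow> bool list" where
  "bin_word p a = map (\<lambda>l. odd (a div 2 ^ (p - 1 - l))) [0..<p]"

definition trunc_p :: "nat \<Rightarrow> real \<Rightarrow> real" where
  "trunc_p p x = real_of_int \<lfloor>2 ^ p * x\<rfloor> / 2 ^ p"

text \<open>The word U_m: concatenation of the p-digit binary words of the truncated
  coordinates in the order X_{1,1},...,X_{1,d},X_{2,1},...,X_{N,d} (0-based here).\<close>
definition word_of_points :: "nat \<Rightarrow> nat \<Rightarrow> nat \<Rightarrow> (nat \<Rightarrow> nat \<Rightarrow> real) \<Rightarrow> bool list" where
  "word_of_points p d N X =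
     concat (map (\<lambda>j. concat (map (\<lambda>i. bin_word p (nat \<lfloor>2 ^ p * X j i\<rfloor>)) [0..<d])) [0..<N])"

text \<open>Probability space of N independent uniform random points in [0,1)^d:
  the random point X_j is the projection omega j.\<close>
definition rand_points :: "nat \<Rightarrow> nat \<Rightarrow> (nat \<Rightarrow> nat \<Rightarrow> real) measure" where
  "rand_points d N =
     PiM {..<N} (\<lambda>_. PiM {..<d} (\<lambda>_. uniform_measure lborel {0..<1::real}))"

end

theory Submission
  imports Defs
begin

text \<open>
  The \<open>p\<close> binary digits of \<open>\<lfloor>2^p x\<rfloor>\<close> read back as the truncation of \<open>x\<close>, and for a fixed
  word \<open>w\<close> of length \<open>m\<close> the event \<open>U = w\<close> is, up to a null set, a product of \<open>dN\<close> dyadic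
  intervals of length \<open>2^(-p)\<close>, so it has probability \<open>2^(-m)\<close>.

  Truncation moves every coordinate down by less than \<open>2^(-p)\<close>. The number of points in an
  anchored box is monotone in its corner, and its volume is \<open>1\<close>-Lipschitz in each coordinate of
  the corner; enlarging or shrinking the box by \<open>2^(-p)\<close> in every direction therefore shows that
  the star discrepancy changes by at most \<open>d/2^p\<close>. The same sandwich argument with corners of
  rational coordinates makes the star discrepancy a countable supremum, hence measurable, which is
  what the comparison of probabilities needs.
\<close>

section \<open>Binary digits\<close>

lemma length_bin_word [simp]: "length (bin_word p a) = p"
  by (simp add: bin_word_def)

lemma bin_word_Suc: "bin_word (Suc p) a = odd (a div 2 ^ p) # bin_word p a"
  unfolding bin_word_def by (simp add: upt_conv_Cons map_Suc_upt[symmetric] del: upt_Suc)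

lemma bin_word_mod: "bin_word p (a mod 2 ^ p) = bin_word p a"
  unfolding bin_word_def
  by (intro map_cong refl) (auto simp: bit_iff_odd[symmetric] take_bit_eq_mod[symmetric] bit_take_bit_iff)

lemma dyadic_value_bin_word:
  "(\<Sum>l<p. (if bin_word p a ! l then 1 else 0) / 2 ^ (l + 1) :: real) = real (a mod 2 ^ p) / 2 ^ p"
proof (induction p)
  case 0
  then show ?case by simp
next
  case (Suc p)
  let ?digit = "\<lambda>b. if b then 1 else 0 :: real"
  have "(\<Sum>l<Suc p. ?digit (bin_word (Suc p) a ! l) / 2 ^ (l + 1))
      = ?digit (odd (a div 2 ^ p)) / 2 + (\<Sum>l<p. ?digit (bin_word p a ! l) / 2 ^ (l + 1)) / 2"
    unfolding sum.lessThan_Suc_shift by (simp add: bin_word_Suc sum_divide_distrib)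
  also have "\<dots> = (2 ^ p * real (a div 2 ^ p mod 2) + real (a mod 2 ^ p)) / 2 ^ Suc p"
    using Suc.IH by (simp add: odd_iff_mod_2_eq_one field_simps)
  also have "\<dots> = real (a mod 2 ^ Suc p) / 2 ^ Suc p"
    unfolding power_Suc2[of 2 p] mod_mult2_eq by simp
  finally show ?case .
qed

lemma length_concat_map_upt:
  "(\<And>j. j < n \<Longrightarrow> length (f j) = L) \<Longrightarrow> length (concat (map f [0..<n])) = n * L"
  by (induction n) auto

lemma nth_concat_map_upt:
  assumes "\<And>j. j < n \<Longrightarrow> length (f j) = L" "j < n" "r < L"
  shows "concat (map f [0..<n]) ! (j * L + r) = f j ! r"
  using assms
proof (induction n)
  case (Suc n)
  have "length (concat (map f [0..<n])) = n * L"
    using Suc.prems(1) by (simp add: length_concat_map_upt)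
  moreover have "j * L + r < n * L" if "j < n"
  proof -
    have "j * L + r < Suc j * L" using \<open>r < L\<close> by simp
    also have "\<dots> \<le> n * L" using that by (intro mult_le_mono1) simp
    finally show ?thesis .
  qed
  ultimately show ?case
    using Suc by (cases "j < n") (simp_all add: nth_append less_Suc_eq)
qed simp

definition digits_word :: "nat \<Rightarrow> nat \<Rightarrow> nat \<Rightarrow> (nat \<Rightarrow> nat \<Rightarrow> nat) \<Rightarrow> bool list" where
  "digits_word p d N a = concat (map (\<lambda>j. concat (map (\<lambda>i. bin_word p (a j i)) [0..<d])) [0..<N])"

lemma word_of_points_eq_digits_word:
  "word_of_points p d N X = digits_word p d N (\<lambda>j i. nat \<lfloor>2 ^ p * X j i\<rfloor>)"
  by (simp add: word_of_points_def digits_word_def)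

lemma length_digits_word: "length (digits_word p d N a) = p * d * N"
  unfolding digits_word_def
  by (subst length_concat_map_upt[where L = "d * p"]) (simp_all add: length_concat_map_upt)

lemma nth_digits_word:
  assumes "k < N" "i < d" "l < p"
  shows "digits_word p d N a ! ((k * d + i) * p + l) = bin_word p (a k i) ! l"
proof -
  have "i * p + l < Suc i * p" using assms by simp
  also have "\<dots> \<le> d * p" using assms by (intro mult_le_mono1) simp
  finally have "i * p + l < d * p" .
  then have "digits_word p d N a ! (k * (d * p) + (i * p + l))
      = concat (map (\<lambda>i. bin_word p (a k i)) [0..<d]) ! (i * p + l)"
    unfolding digits_word_def using assms by (intro nth_concat_map_upt) (simp_all add: length_concat_map_upt)
  also have "\<dots> = bin_word p (a k i) ! l"
    using assms by (intro nth_concat_map_upt) simp_all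
  finally show ?thesis by (simp add: algebra_simps)
qed

lemma word_to_points_digits_word:
  assumes "k < N" "i < d"
  shows "word_to_points p d (digits_word p d N a) k i = real (a k i mod 2 ^ p) / 2 ^ p"
  unfolding word_to_points_def
  by (simp add: nth_digits_word assms dyadic_value_bin_word[symmetric])

lemma digits_word_eq_iff:
  "digits_word p d N a = digits_word p d N b \<longleftrightarrow> (\<forall>k<N. \<forall>i<d. a k i mod 2 ^ p = b k i mod 2 ^ p)"
proof
  assume eq: "digits_word p d N a = digits_word p d N b"
  show "\<forall>k<N. \<forall>i<d. a k i mod 2 ^ p = b k i mod 2 ^ p"
  proof (intro allI impI)
    fix k i
    assume "k < N" "i < d"
    then have "real (a k i mod 2 ^ p) / 2 ^ p = real (b k i mod 2 ^ p) / 2 ^ p"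
      using eq by (simp flip: word_to_points_digits_word)
    then show "a k i mod 2 ^ p = b k i mod 2 ^ p"
      by simp
  qed
next
  assume "\<forall>k<N. \<forall>i<d. a k i mod 2 ^ p = b k i mod 2 ^ p"
  then have "bin_word p (a k i) = bin_word p (b k i)" if "k < N" "i < d" for k i
    using that by (metis bin_word_mod)
  then show "digits_word p d N a = digits_word p d N b"
    unfolding digits_word_def by (intro arg_cong[where f = concat] map_cong refl) simp
qed

definition digit_arrays :: "nat \<Rightarrow> nat \<Rightarrow> nat \<Rightarrow> (nat \<Rightarrow> nat \<Rightarrow> nat) set" where
  "digit_arrays p d N = (\<Pi>\<^sub>E k\<in>{..<N}. \<Pi>\<^sub>E i\<in>{..<d}. {..<2 ^ p})"

lemma inj_on_digits_word: "inj_on (digits_word p d N) (digit_arrays p d N)"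
proof (rule inj_onI)
  fix a b
  assume a: "a \<in> digit_arrays p d N" and b: "b \<in> digit_arrays p d N"
    and "digits_word p d N a = digits_word p d N b"
  then have same: "a k i = b k i" if "k < N" "i < d" for k i
    using that by (auto simp: digits_word_eq_iff digit_arrays_def PiE_iff)
  show "a = b"
  proof (rule PiE_ext[OF a[unfolded digit_arrays_def] b[unfolded digit_arrays_def]])
    fix k
    assume "k \<in> {..<N}"
    with a b same show "a k = b k"
      by (intro PiE_ext[of _ "{..<d}" "\<lambda>_. {..<2 ^ p}"]) (auto simp: digit_arrays_def)
  qed
qed

lemma digits_word_image: "digits_word p d N ` digit_arrays p d N = {w. length w = p * d * N}"
proof (rule card_subset_eq)
  show "finite {w :: bool list. length w = p * d * N}"
    using finite_lists_length_eq[of "UNIV :: bool set"] by simp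
  show "digits_word p d N ` digit_arrays p d N \<subseteq> {w. length w = p * d * N}"
    by (auto simp: length_digits_word)
  have "card (digit_arrays p d N) = 2 ^ (p * d * N)"
    by (simp add: digit_arrays_def card_PiE power_mult[symmetric] ac_simps)
  then show "card (digits_word p d N ` digit_arrays p d N) = card {w :: bool list. length w = p * d * N}"
    using card_lists_length_eq[of "UNIV :: bool set"] by (simp add: card_image inj_on_digits_word)
qed

lemma nat_floor_pow2_less:
  assumes "0 \<le> x" "x < 1"
  shows "nat \<lfloor>2 ^ p * x\<rfloor> < 2 ^ p"
  using assms by (simp add: nat_less_iff floor_less_iff)

definition dyadic_interval :: "nat \<Rightarrow> nat \<Rightarrow> real set" where
  "dyadic_interval p a = {real a / 2 ^ p ..< (real a + 1) / 2 ^ p}"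

lemma nat_floor_pow2_eq_iff:
  assumes "0 \<le> x"
  shows "nat \<lfloor>2 ^ p * x\<rfloor> = a \<longleftrightarrow> x \<in> dyadic_interval p a"
proof -
  have "nat \<lfloor>2 ^ p * x\<rfloor> = a \<longleftrightarrow> \<lfloor>2 ^ p * x\<rfloor> = int a"
    using assms by auto
  also have "\<dots> \<longleftrightarrow> real a \<le> 2 ^ p * x \<and> 2 ^ p * x < real a + 1"
    by (simp add: floor_eq_iff)
  also have "\<dots> \<longleftrightarrow> x \<in> dyadic_interval p a"
    by (simp add: dyadic_interval_def pos_divide_le_eq pos_less_divide_eq mult.commute)
  finally show ?thesis .
qed

lemma word_to_points_word_of_points:
  assumes "k < N" "i < d" "0 \<le> X k i" "X k i < 1"
  shows "word_to_points p d (word_of_points p d N X) k i = trunc_p p (X k i)"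
  using assms nat_floor_pow2_less[OF assms(3,4), of p]
  by (simp add: word_of_points_eq_digits_word word_to_points_digits_word trunc_p_def)

lemma trunc_p_bounds:
  assumes "0 \<le> x"
  shows "0 \<le> trunc_p p x" "trunc_p p x \<le> x" "x < trunc_p p x + 1 / 2 ^ p"
proof -
  have "real_of_int \<lfloor>2 ^ p * x\<rfloor> \<le> 2 ^ p * x" "2 ^ p * x < real_of_int \<lfloor>2 ^ p * x\<rfloor> + 1"
    by linarith+
  then show "0 \<le> trunc_p p x" "trunc_p p x \<le> x" "x < trunc_p p x + 1 / 2 ^ p"
    using assms unfolding trunc_p_def by (auto simp: field_simps)
qed

section \<open>Local and star discrepancy\<close>

definition unit_corners :: "nat \<Rightarrow> (nat \<Rightarrow> real) set" where
  "unit_corners d = {t. \<forall>i<d. 0 \<le> t i \<and> t i \<le> 1}"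

definition box_count :: "nat \<Rightarrow> nat \<Rightarrow> (nat \<Rightarrow> nat \<Rightarrow> real) \<Rightarrow> (nat \<Rightarrow> real) \<Rightarrow> nat" where
  "box_count d N x t = card {k. k < N \<and> (\<forall>i<d. x k i < t i)}"

definition local_disc :: "nat \<Rightarrow> nat \<Rightarrow> (nat \<Rightarrow> nat \<Rightarrow> real) \<Rightarrow> (nat \<Rightarrow> real) \<Rightarrow> real" where
  "local_disc d N x t = \<bar>real (box_count d N x t) / real N - (\<Prod>i<d. t i)\<bar>"

lemma star_disc_eq_SUP_local_disc: "star_disc d N x = (SUP t\<in>unit_corners d. local_disc d N x t)"
  by (simp add: star_disc_def unit_corners_def local_disc_def box_count_def)

lemma box_count_le: "box_count d N x t \<le> N"
  using card_mono[of "{..<N}" "{k. k < N \<and> (\<forall>i<d. x k i < t i)}"] by (auto simp: box_count_def)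

lemma box_count_mono:
  assumes "\<And>k. k < N \<Longrightarrow> \<forall>i<d. x k i < t i \<Longrightarrow> \<forall>i<d. y k i < s i"
  shows "box_count d N x t \<le> box_count d N y s"
  unfolding box_count_def by (rule card_mono) (use assms in auto)

lemma box_count_eq_sum: "real (box_count d N x t) = (\<Sum>k<N. if \<forall>i<d. x k i < t i then 1 else 0)"
  unfolding box_count_def by (simp add: sum.If_cases Collect_conj_eq lessThan_def)

lemma volume_unit_corner:
  "t \<in> unit_corners d \<Longrightarrow> 0 \<le> (\<Prod>i<d. t i) \<and> (\<Prod>i<d. t i) \<le> 1"
  unfolding unit_corners_def by (auto intro!: prod_nonneg prod_le_1)

lemma volume_diff_le:
  assumes "s \<in> unit_corners d" "t \<in> unit_corners d" "\<And>i. i < d \<Longrightarrow> \<bar>s i - t i\<bar> \<le> e"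
  shows "\<bar>(\<Prod>i<d. s i) - (\<Prod>i<d. t i)\<bar> \<le> real d * e"
proof -
  have "\<bar>(\<Prod>i<d. s i) - (\<Prod>i<d. t i)\<bar> \<le> (\<Sum>i<d. \<bar>s i - t i\<bar>)"
    using norm_prod_diff[of "{..<d}" s t] assms(1,2) by (simp add: unit_corners_def)
  also have "\<dots> \<le> (\<Sum>i<d. e)"
    using assms(3) by (intro sum_mono) simp
  finally show ?thesis by simp
qed

lemma local_disc_le_1:
  assumes "t \<in> unit_corners d"
  shows "local_disc d N x t \<le> 1"
proof -
  have "0 \<le> real (box_count d N x t) / real N" "real (box_count d N x t) / real N \<le> 1"
    using box_count_le[of d N x t] by (cases "N = 0"; simp add: divide_le_eq_1)+
  then show ?thesis
    using volume_unit_corner[OF assms] unfolding local_disc_def abs_le_iff by linarith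
qed

lemma local_disc_le_star_disc: "t \<in> unit_corners d \<Longrightarrow> local_disc d N x t \<le> star_disc d N x"
  unfolding star_disc_eq_SUP_local_disc
  by (rule cSUP_upper) (auto intro!: bdd_aboveI2 local_disc_le_1)

lemma star_disc_le:
  "(\<And>t. t \<in> unit_corners d \<Longrightarrow> local_disc d N x t \<le> B) \<Longrightarrow> star_disc d N x \<le> B"
  unfolding star_disc_eq_SUP_local_disc
  by (rule cSUP_least) (auto simp: unit_corners_def)

lemma local_disc_sandwich:
  assumes "box_count d N x s \<le> c" "c \<le> box_count d N x t"
    and "(\<Prod>i<d. t i) - \<delta> \<le> v" "v \<le> (\<Prod>i<d. s i) + \<delta>"
  shows "\<bar>real c / real N - v\<bar> \<le> max (local_disc d N x s) (local_disc d N x t) + \<delta>"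
proof -
  have "real (box_count d N x s) / real N \<le> real c / real N"
    "real c / real N \<le> real (box_count d N x t) / real N"
    using assms(1,2) by (simp_all add: divide_right_mono)
  then show ?thesis
    using assms(3,4) unfolding local_disc_def by linarith
qed

lemma star_disc_perturb:
  assumes "0 \<le> e"
    and close: "\<And>k i. k < N \<Longrightarrow> i < d \<Longrightarrow> 0 \<le> y k i \<and> y k i \<le> x k i \<and> x k i < y k i + e \<and> x k i < 1"
  shows "\<bar>star_disc d N x - star_disc d N y\<bar> \<le> real d * e"
proof -
  have "local_disc d N y t \<le> star_disc d N x + real d * e" if t: "t \<in> unit_corners d" for t
  proof -
    define t' where "t' = (\<lambda>i. min 1 (t i + e))"
    have t': "t' \<in> unit_corners d"
      using t \<open>0 \<le> e\<close> by (auto simp: unit_corners_def t'_def)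
    have "box_count d N x t \<le> box_count d N y t"
      by (rule box_count_mono) (use close in fastforce)
    moreover have "box_count d N y t \<le> box_count d N x t'"
      by (rule box_count_mono) (use close in \<open>force simp: t'_def\<close>)
    moreover have "\<bar>(\<Prod>i<d. t' i) - (\<Prod>i<d. t i)\<bar> \<le> real d * e"
      by (rule volume_diff_le[OF t' t]) (use t \<open>0 \<le> e\<close> in \<open>auto simp: t'_def unit_corners_def\<close>)
    ultimately have "local_disc d N y t \<le> max (local_disc d N x t) (local_disc d N x t') + real d * e"
      unfolding local_disc_def[of d N y] using \<open>0 \<le> e\<close> by (intro local_disc_sandwich) auto
    then show ?thesis
      using local_disc_le_star_disc[OF t, of N x] local_disc_le_star_disc[OF t', of N x] by linarith
  qed
  moreover have "local_disc d N x t \<le> star_disc d N y + real d * e" if t: "t \<in> unit_corners d" for t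
  proof -
    define s where "s = (\<lambda>i. max 0 (t i - e))"
    have s: "s \<in> unit_corners d"
      using t \<open>0 \<le> e\<close> by (auto simp: unit_corners_def s_def)
    have "box_count d N y s \<le> box_count d N x t"
      by (rule box_count_mono) (use close in \<open>fastforce simp: s_def\<close>)
    moreover have "box_count d N x t \<le> box_count d N y t"
      by (rule box_count_mono) (use close in fastforce)
    moreover have "\<bar>(\<Prod>i<d. t i) - (\<Prod>i<d. s i)\<bar> \<le> real d * e"
      by (rule volume_diff_le[OF t s]) (use t \<open>0 \<le> e\<close> in \<open>auto simp: s_def unit_corners_def\<close>)
    ultimately have "local_disc d N x t \<le> max (local_disc d N y s) (local_disc d N y t) + real d * e"
      unfolding local_disc_def[of d N x] using \<open>0 \<le> e\<close> by (intro local_disc_sandwich) auto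
    then show ?thesis
      using local_disc_le_star_disc[OF s, of N y] local_disc_le_star_disc[OF t, of N y] by linarith
  qed
  ultimately have "star_disc d N y \<le> star_disc d N x + real d * e"
    "star_disc d N x \<le> star_disc d N y + real d * e"
    by (simp_all add: star_disc_le)
  then show ?thesis
    by linarith
qed

text \<open>Clipping to \<open>[0,1]\<close> makes every list a corner (entries beyond the length of \<open>q\<close> are
  unspecified but harmless) and lets corners with coordinates \<open>0\<close> or \<open>1\<close> be hit exactly.\<close>
definition rat_corner :: "nat \<Rightarrow> rat list \<Rightarrow> nat \<Rightarrow> real" where
  "rat_corner d q i = (if i < d then max 0 (min 1 (of_rat (q ! i))) else 0)"

lemma rat_corner_in_unit_corners: "rat_corner d q \<in> unit_corners d"
  by (simp add: rat_corner_def unit_corners_def)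

lemma rat_corner_approx:
  assumes t: "t \<in> unit_corners d" and "0 < \<eta>"
  obtains q_low q_up where "\<And>i. i < d \<Longrightarrow> t i - \<eta> \<le> rat_corner d q_low i \<and> rat_corner d q_low i \<le> t i"
    and "\<And>i. i < d \<Longrightarrow> t i \<le> rat_corner d q_up i \<and> rat_corner d q_up i \<le> t i + \<eta>"
proof -
  have "\<forall>i. \<exists>r. t i - \<eta> < of_rat r \<and> of_rat r < t i"
    using \<open>0 < \<eta>\<close> by (intro allI of_rat_dense) simp
  then obtain g_low where g_low: "\<And>i. t i - \<eta> < of_rat (g_low i) \<and> of_rat (g_low i) < t i"
    by metis
  have "\<forall>i. \<exists>r. t i < of_rat r \<and> of_rat r < t i + \<eta>"
    using \<open>0 < \<eta>\<close> by (intro allI of_rat_dense) simp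
  then obtain g_up where g_up: "\<And>i. t i < of_rat (g_up i) \<and> of_rat (g_up i) < t i + \<eta>"
    by metis
  show ?thesis
  proof
    show "t i - \<eta> \<le> rat_corner d (map g_low [0..<d]) i \<and> rat_corner d (map g_low [0..<d]) i \<le> t i"
      if "i < d" for i
      using g_low[of i] t that \<open>0 < \<eta>\<close> by (auto simp: rat_corner_def unit_corners_def)
    show "t i \<le> rat_corner d (map g_up [0..<d]) i \<and> rat_corner d (map g_up [0..<d]) i \<le> t i + \<eta>"
      if "i < d" for i
      using g_up[of i] t that \<open>0 < \<eta>\<close> by (auto simp: rat_corner_def unit_corners_def)
  qed
qed

lemma star_disc_eq_SUP_rat_corner:
  "star_disc d N x = (SUP q. local_disc d N x (rat_corner d q))"
proof (rule antisym)
  have bdd: "bdd_above (range (\<lambda>q. local_disc d N x (rat_corner d q)))"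
    by (auto intro!: bdd_aboveI2 local_disc_le_1 rat_corner_in_unit_corners)
  show "star_disc d N x \<le> (SUP q. local_disc d N x (rat_corner d q))"
  proof (rule star_disc_le, rule field_le_epsilon)
    fix t :: "nat \<Rightarrow> real" and e :: real
    assume t: "t \<in> unit_corners d" and "0 < e"
    define \<eta> where "\<eta> = e / (real d + 1)"
    have "0 < \<eta>" "real d * \<eta> \<le> e"
      using \<open>0 < e\<close> by (simp_all add: \<eta>_def field_simps)
    then obtain q_low q_up
      where q_low: "\<And>i. i < d \<Longrightarrow> t i - \<eta> \<le> rat_corner d q_low i \<and> rat_corner d q_low i \<le> t i"
        and q_up: "\<And>i. i < d \<Longrightarrow> t i \<le> rat_corner d q_up i \<and> rat_corner d q_up i \<le> t i + \<eta>"
      using rat_corner_approx[OF t] by blast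
    have "box_count d N x (rat_corner d q_low) \<le> box_count d N x t"
      by (rule box_count_mono) (use q_low in fastforce)
    moreover have "box_count d N x t \<le> box_count d N x (rat_corner d q_up)"
      by (rule box_count_mono) (use q_up in fastforce)
    moreover have "\<bar>(\<Prod>i<d. rat_corner d q_up i) - (\<Prod>i<d. t i)\<bar> \<le> real d * \<eta>"
      "\<bar>(\<Prod>i<d. t i) - (\<Prod>i<d. rat_corner d q_low i)\<bar> \<le> real d * \<eta>"
      by (intro volume_diff_le t rat_corner_in_unit_corners; use q_up q_low in force)+
    ultimately have "local_disc d N x t \<le>
        max (local_disc d N x (rat_corner d q_low)) (local_disc d N x (rat_corner d q_up)) + real d * \<eta>"
      unfolding local_disc_def[of d N x t] by (intro local_disc_sandwich) auto
    also have "\<dots> \<le> (SUP q. local_disc d N x (rat_corner d q)) + e"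
      using cSUP_upper[OF UNIV_I bdd, of q_low] cSUP_upper[OF UNIV_I bdd, of q_up] \<open>real d * \<eta> \<le> e\<close>
      by linarith
    finally show "local_disc d N x t \<le> (SUP q. local_disc d N x (rat_corner d q)) + e" .
  qed
  show "(SUP q. local_disc d N x (rat_corner d q)) \<le> star_disc d N x"
    by (rule cSUP_least) (auto intro: local_disc_le_star_disc rat_corner_in_unit_corners)
qed

lemma borel_measurable_star_disc:
  assumes [measurable]: "\<And>k i. k < N \<Longrightarrow> i < d \<Longrightarrow> (\<lambda>\<omega>. X \<omega> k i) \<in> borel_measurable M"
  shows "(\<lambda>\<omega>. star_disc d N (X \<omega>)) \<in> borel_measurable M"
proof -
  have "(\<lambda>\<omega>. local_disc d N (X \<omega>) t) \<in> borel_measurable M" for t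
    unfolding local_disc_def box_count_eq_sum by measurable
  then show ?thesis
    unfolding star_disc_eq_SUP_rat_corner
    by (intro borel_measurable_cSUP) (auto intro!: bdd_aboveI2 local_disc_le_1 rat_corner_in_unit_corners)
qed

lemma star_disc_word_of_points_close:
  assumes "\<And>k i. k < N \<Longrightarrow> i < d \<Longrightarrow> 0 \<le> X k i \<and> X k i < 1"
  shows "\<bar>star_disc d N X - star_disc d N (word_to_points p d (word_of_points p d N X))\<bar> \<le> real d / 2 ^ p"
proof -
  have "\<bar>star_disc d N X - star_disc d N (word_to_points p d (word_of_points p d N X))\<bar>
      \<le> real d * (1 / 2 ^ p)"
    by (rule star_disc_perturb)
      (use assms in \<open>auto simp: word_to_points_word_of_points trunc_p_bounds\<close>)
  then show ?thesis
    by simp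
qed

section \<open>Random points\<close>

abbreviation unit_uniform :: "real measure" where
  "unit_uniform \<equiv> uniform_measure lborel {0..<1}"

lemma prob_space_unit_uniform: "prob_space unit_uniform"
  by (rule prob_space_uniform_measure) auto

lemma prob_space_rand_points: "prob_space (rand_points d N)"
  unfolding rand_points_def by (intro prob_space_PiM prob_space_unit_uniform)

lemma measurable_rand_points_coordinate [measurable]:
  assumes "k < N" "i < d"
  shows "(\<lambda>\<omega>. \<omega> k i) \<in> borel_measurable (rand_points d N)"
proof -
  have "(\<lambda>\<omega>. \<omega> k) \<in> measurable (rand_points d N) (PiM {..<d} (\<lambda>_. unit_uniform))"
    unfolding rand_points_def by (intro measurable_component_singleton) (simp add: assms)
  moreover have "(\<lambda>y. y i) \<in> measurable (PiM {..<d} (\<lambda>_. unit_uniform)) unit_uniform"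
    by (intro measurable_component_singleton) (simp add: assms)
  ultimately have "(\<lambda>\<omega>. \<omega> k i) \<in> measurable (rand_points d N) unit_uniform"
    by (rule measurable_compose)
  also have "measurable (rand_points d N) unit_uniform = borel_measurable (rand_points d N)"
    by (rule measurable_cong_sets) simp_all
  finally show ?thesis .
qed

lemma AE_PiM_all_components:
  assumes "finite I" "\<And>i. i \<in> I \<Longrightarrow> prob_space (M i)" "\<And>i. i \<in> I \<Longrightarrow> AE x in M i. P i x"
  shows "AE x in PiM I M. \<forall>i\<in>I. P i (x i)"
  using assms by (intro AE_finite_allI) (auto intro: AE_PiM_component)

lemma AE_rand_points_unit_interval:
  "AE \<omega> in rand_points d N. \<forall>k<N. \<forall>i<d. 0 \<le> \<omega> k i \<and> \<omega> k i < 1"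
proof -
  have coordinates: "AE y in PiM {..<d} (\<lambda>_. unit_uniform). \<forall>i\<in>{..<d}. 0 \<le> y i \<and> y i < 1"
    by (rule AE_PiM_all_components) (auto intro: prob_space_unit_uniform AE_uniform_measureI)
  have "AE \<omega> in rand_points d N. \<forall>k\<in>{..<N}. \<forall>i\<in>{..<d}. 0 \<le> \<omega> k i \<and> \<omega> k i < 1"
    unfolding rand_points_def
    by (rule AE_PiM_all_components) (auto intro: prob_space_PiM prob_space_unit_uniform coordinates)
  then show ?thesis
    by (rule eventually_mono) simp
qed

lemma emeasure_unit_uniform_dyadic_interval:
  assumes "a < 2 ^ p"
  shows "emeasure unit_uniform (dyadic_interval p a) = ennreal (1 / 2 ^ p)"
proof -
  have "real a + 1 \<le> 2 ^ p"
    using assms by (metis Suc_leI of_nat_Suc of_nat_le_iff of_nat_numeral of_nat_power add.commute)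
  then have "(real a + 1) / 2 ^ p \<le> 1"
    by simp
  then have "emeasure unit_uniform (dyadic_interval p a) = ennreal ((real a + 1) / 2 ^ p - real a / 2 ^ p)"
    by (simp add: dyadic_interval_def min_absorb2 divide_right_mono divide_ennreal_def)
  also have "(real a + 1) / 2 ^ p - real a / 2 ^ p = 1 / 2 ^ p"
    by (simp add: field_simps)
  finally show ?thesis .
qed

lemma emeasure_PiM_PiE_prob_space:
  assumes "finite I" "prob_space M" "\<And>i. i \<in> I \<Longrightarrow> A i \<in> sets M"
  shows "emeasure (PiM I (\<lambda>_. M)) (Pi\<^sub>E I A) = (\<Prod>i\<in>I. emeasure M (A i))"
proof -
  have "product_sigma_finite (\<lambda>_. M)"
    using prob_space_imp_sigma_finite[OF assms(2)] by (simp add: product_sigma_finite_def)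
  then show ?thesis
    using assms(1,3) by (rule product_sigma_finite.emeasure_PiM)
qed

lemma sets_rand_points_word_of_points_eq:
  "{\<omega> \<in> space (rand_points d N). word_of_points p d N \<omega> = digits_word p d N c} \<in> sets (rand_points d N)"
  unfolding word_of_points_eq_digits_word digits_word_eq_iff by measurable

lemma emeasure_rand_points_word_of_points_eq:
  assumes c: "c \<in> digit_arrays p d N"
  shows "emeasure (rand_points d N) {\<omega> \<in> space (rand_points d N). word_of_points p d N \<omega> = digits_word p d N c}
    = ennreal (1 / 2 ^ (p * d * N))"
proof -
  let ?M = "rand_points d N"
  define B where "B = (\<Pi>\<^sub>E k\<in>{..<N}. \<Pi>\<^sub>E i\<in>{..<d}. dyadic_interval p (c k i))"
  have c_less: "c k i < 2 ^ p" if "k < N" "i < d" for k i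
    using c that by (auto simp: digit_arrays_def PiE_iff)
  have "AE \<omega> in ?M. \<omega> \<in> {\<omega> \<in> space ?M. word_of_points p d N \<omega> = digits_word p d N c} \<longleftrightarrow> \<omega> \<in> B"
    using AE_rand_points_unit_interval AE_space
  proof eventually_elim
    case (elim \<omega>)
    then have "\<omega> \<in> (\<Pi>\<^sub>E k\<in>{..<N}. \<Pi>\<^sub>E i\<in>{..<d}. UNIV)"
      by (simp add: rand_points_def space_PiM)
    moreover have "nat \<lfloor>2 ^ p * \<omega> k i\<rfloor> mod 2 ^ p = c k i mod 2 ^ p \<longleftrightarrow> \<omega> k i \<in> dyadic_interval p (c k i)"
      if "k < N" "i < d" for k i
      using elim that c_less[OF that] nat_floor_pow2_less[of "\<omega> k i" p]
      by (simp add: nat_floor_pow2_eq_iff)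
    then have "word_of_points p d N \<omega> = digits_word p d N c \<longleftrightarrow> (\<forall>k<N. \<forall>i<d. \<omega> k i \<in> dyadic_interval p (c k i))"
      by (simp add: word_of_points_eq_digits_word digits_word_eq_iff)
    ultimately show ?case
      using elim by (auto simp: B_def PiE_iff)
  qed
  then have "emeasure ?M {\<omega> \<in> space ?M. word_of_points p d N \<omega> = digits_word p d N c} = emeasure ?M B"
    by (rule emeasure_eq_AE[OF _ sets_rand_points_word_of_points_eq])
      (auto simp: B_def rand_points_def dyadic_interval_def intro!: sets_PiM_I_finite)
  also have "\<dots> = (\<Prod>k<N. \<Prod>i<d. emeasure unit_uniform (dyadic_interval p (c k i)))"
    unfolding B_def rand_points_def
    by (simp add: emeasure_PiM_PiE_prob_space prob_space_PiM prob_space_unit_uniform sets_PiM_I_finite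
        dyadic_interval_def)
  also have "\<dots> = (\<Prod>k<N. \<Prod>i<d. ennreal (1 / 2 ^ p))"
    by (simp add: emeasure_unit_uniform_dyadic_interval c_less)
  also have "\<dots> = ennreal (1 / 2 ^ (p * d * N))"
    by (simp add: prod_ennreal ennreal_power power_mult[symmetric] power_one_over)
  finally show ?thesis .
qed

lemma distr_rand_points_word_of_points:
  fixes p d N :: nat
  defines "W \<equiv> {w :: bool list. length w = p * d * N}"
  shows "distr (rand_points d N) (uniform_count_measure W) (word_of_points p d N) = uniform_count_measure W"
proof -
  let ?M = "rand_points d N"
  have W: "finite W" "card W = 2 ^ (p * d * N)"
    using finite_lists_length_eq[of "UNIV :: bool set"] card_lists_length_eq[of "UNIV :: bool set"]
    by (simp_all add: W_def)
  have preimage: "word_of_points p d N -` {w} \<inter> space ?M \<in> sets ?M \<and>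
      emeasure ?M (word_of_points p d N -` {w} \<inter> space ?M) = ennreal (1 / 2 ^ (p * d * N))"
    if "w \<in> W" for w
  proof -
    obtain c where "c \<in> digit_arrays p d N" "w = digits_word p d N c"
      using \<open>w \<in> W\<close> digits_word_image unfolding W_def by blast
    moreover have "word_of_points p d N -` {w} \<inter> space ?M = {\<omega> \<in> space ?M. word_of_points p d N \<omega> = w}"
      by blast
    ultimately show ?thesis
      using sets_rand_points_word_of_points_eq emeasure_rand_points_word_of_points_eq by simp
  qed
  have "word_of_points p d N \<in> measurable ?M (count_space W)"
    unfolding measurable_count_space_eq2[OF W(1)]
    using preimage by (auto simp: W_def word_of_points_eq_digits_word length_digits_word)
  then have measurable: "word_of_points p d N \<in> measurable ?M (uniform_count_measure W)"
    by (simp add: measurable_cong_sets[OF refl sets_uniform_count_measure_count_space])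
  show ?thesis
  proof (rule measure_eqI_finite[OF _ sets_uniform_count_measure W(1)])
    fix w assume "w \<in> W"
    then show "emeasure (distr ?M (uniform_count_measure W) (word_of_points p d N)) {w}
        = emeasure (uniform_count_measure W) {w}"
      using preimage[OF \<open>w \<in> W\<close>] W
      by (simp add: emeasure_distr[OF measurable] sets_uniform_count_measure emeasure_uniform_count_measure
          divide_ennreal[symmetric] ennreal_power)
  qed (simp add: sets_uniform_count_measure)
qed

theorem lemma1:
  fixes d N p :: nat
  assumes "d \<ge> 1" and "N \<ge> 1" and "p \<ge> 1"
  defines "M \<equiv> rand_points d N"
    and "m \<equiv> p * d * N"
    and "U \<equiv> (\<lambda>\<omega>. word_of_points p d N \<omega>)"
  shows "(AE \<omega> in M. \<forall>k<N. \<forall>i<d. word_to_points p d (U \<omega>) k i = trunc_p p (\<omega> k i))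
       \<and> distr M (uniform_count_measure {w :: bool list. length w = m}) U
           = uniform_count_measure {w :: bool list. length w = m}
       \<and> (AE \<omega> in M. \<bar>star_disc d N \<omega> - star_disc d N (word_to_points p d (U \<omega>))\<bar> \<le> real d / 2 ^ p)
       \<and> (\<forall>C > 0. measure M {\<omega> \<in> space M. star_disc d N (word_to_points p d (U \<omega>)) \<ge> C * sqrt (real d / real N)}
                 \<le> measure M {\<omega> \<in> space M. star_disc d N \<omega> \<ge> C * sqrt (real d / real N) - real d / 2 ^ p})"
proof -
  interpret prob_space M
    unfolding M_def by (rule prob_space_rand_points)
  have [measurable]: "star_disc d N \<in> borel_measurable M"
    using borel_measurable_star_disc[of N d "\<lambda>\<omega>. \<omega>"] by (simp add: M_def)
  have unit: "AE \<omega> in M. \<forall>k<N. \<forall>i<d. 0 \<le> \<omega> k i \<and> \<omega> k i < 1"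
    unfolding M_def by (rule AE_rand_points_unit_interval)
  then have "AE \<omega> in M. \<forall>k<N. \<forall>i<d. word_to_points p d (U \<omega>) k i = trunc_p p (\<omega> k i)"
    by eventually_elim (simp add: U_def word_to_points_word_of_points)
  moreover have close: "AE \<omega> in M. \<bar>star_disc d N \<omega> - star_disc d N (word_to_points p d (U \<omega>))\<bar> \<le> real d / 2 ^ p"
    using unit by eventually_elim (simp add: U_def star_disc_word_of_points_close)
  moreover have "measure M {\<omega> \<in> space M. star_disc d N (word_to_points p d (U \<omega>)) \<ge> c}
      \<le> measure M {\<omega> \<in> space M. star_disc d N \<omega> \<ge> c - real d / 2 ^ p}" for c
    by (rule finite_measure_mono_AE) (use close in \<open>auto elim: eventually_mono\<close>)
  ultimately show ?thesis
    unfolding M_def m_def U_def by (simp add: distr_rand_points_word_of_points)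
qed

end
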